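(* Let $(a_n)$ be a strictly decreasing sequence of positive reals with $a_n\to0$ and $(b_n)$ positive reals such that $\phi_{ij}:=\frac{b_i/b_j}{1+a_i/a_j}\le C\mu^{|i-j|}$ for all $i,j\in\mathbb{N}$ and some $C>0$, $\mu\in(0,1)$. Then $(a_n/b_n)\in\ell^1$; more precisely, $\sum_{j}a_j/b_j\le\kappa\,(a_1+a_i)/b_i$ for every $i\in\mathbb{N}$, where $\kappa:=C\frac{1+\mu}{1-\mu}$. *)

theory Defs
  imports Complex_Main
begin

end

theory Submission
  imports Defs
begin

text \<open>Since \<open>a\<^sub>j/b\<^sub>j = \<phi>\<^sub>i\<^sub>j (a\<^sub>j + a\<^sub>i)/b\<^sub>i\<close> and \<open>a\<^sub>j \<le> a\<^sub>0\<close>, every term is bounded by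
  \<open>C (a\<^sub>0 + a\<^sub>i)/b\<^sub>i \<mu>\<^bsup>|i-j|\<^esup>\<close>; summing the two-sided geometric series
  \<open>\<Sum>\<^sub>j \<mu>\<^bsup>|i-j|\<^esup> \<le> (1 + \<mu>)/(1 - \<mu>)\<close> gives both claims.\<close>

lemma summable_geometric_distance:
  fixes \<mu> :: real
  assumes "0 \<le> \<mu>" "\<mu> < 1"
  shows "summable (\<lambda>j. \<mu> ^ (if i \<le> j then j - i else i - j))"
    and "(\<Sum>j. \<mu> ^ (if i \<le> j then j - i else i - j)) \<le> (1 + \<mu>) / (1 - \<mu>)"
proof -
  define g where "g = (\<lambda>j. \<mu> ^ (if i \<le> j then j - i else i - j))"
  have shifted: "(\<lambda>n. g (n + i)) = (\<lambda>n. \<mu> ^ n)"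
    by (auto simp: g_def)
  have geom: "summable (\<lambda>n. \<mu> ^ n)"
    using assms by (intro summable_geometric) auto
  have "summable g"
    using summable_iff_shift[of g i] shifted geom by simp
  then show "summable (\<lambda>j. \<mu> ^ (if i \<le> j then j - i else i - j))"
    by (simp add: g_def)
  from \<open>summable g\<close> have "suminf g = (\<Sum>n. \<mu> ^ n) + sum g {..<i}"
    using suminf_split_initial_segment[of g i] shifted by simp
  also have "(\<Sum>n. \<mu> ^ n) = 1 / (1 - \<mu>)"
    using assms by (simp add: suminf_geometric)
  also have "sum g {..<i} = (\<Sum>k<i. \<mu> ^ Suc k)"
  proof -
    have "sum g {..<i} = (\<Sum>j<i. \<mu> ^ Suc (i - Suc j))"
      by (intro sum.cong) (auto simp: g_def Suc_diff_Suc)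
    then show ?thesis
      using sum.nat_diff_reindex[of "\<lambda>k. \<mu> ^ Suc k" i] by simp
  qed
  also have "(\<Sum>k<i. \<mu> ^ Suc k) \<le> (\<Sum>k. \<mu> ^ Suc k)"
    using assms geom by (intro sum_le_suminf) (auto simp: summable_mult)
  also have "(\<Sum>k. \<mu> ^ Suc k) = \<mu> / (1 - \<mu>)"
    using suminf_mult[OF geom, of \<mu>] assms by (simp add: suminf_geometric)
  finally show "(\<Sum>j. \<mu> ^ (if i \<le> j then j - i else i - j)) \<le> (1 + \<mu>) / (1 - \<mu>)"
    by (simp add: g_def add_divide_distrib)
qed

lemma quotient_eq_phi_mult:
  fixes x y u v :: real
  assumes "x > 0" "y > 0" "u > 0" "v > 0"
  shows "y / v = ((u / v) / (1 + x / y)) * ((y + x) / u)"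
proof -
  have "1 + x / y = (y + x) / y"
    using assms by (simp add: field_simps)
  then show ?thesis
    using assms by simp
qed

theorem mainTheorem16:
  fixes a b :: "nat \<Rightarrow> real" and C \<mu> :: real
  assumes a_pos: "\<And>n. a n > 0"
    and a_decr: "\<And>m n. m < n \<Longrightarrow> a n < a m"
    and a_lim: "a \<longlonglongrightarrow> 0"
    and b_pos: "\<And>n. b n > 0"
    and C_pos: "C > 0"
    and mu: "0 < \<mu>" "\<mu> < 1"
    and phi: "\<And>i j. (b i / b j) / (1 + a i / a j) \<le> C * \<mu> ^ (if i \<le> j then j - i else i - j)"
  shows "summable (\<lambda>n. a n / b n) \<and>
         (\<forall>i. (\<Sum>j. a j / b j) \<le> (C * (1 + \<mu>) / (1 - \<mu>)) * (a 0 + a i) / b i)"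
proof -
  define g where "g i j = \<mu> ^ (if i \<le> j then j - i else i - j)" for i j
  define K where "K i = C * (a 0 + a i) / b i" for i
  have g_sums: "summable (g i)" "suminf (g i) \<le> (1 + \<mu>) / (1 - \<mu>)" for i
    using summable_geometric_distance[of \<mu> i] mu unfolding g_def by auto
  have a_le_a0: "a j \<le> a 0" for j
    using a_decr[of 0 j] by (cases j) auto
  have K_nonneg: "K i \<ge> 0" for i
    using C_pos a_pos[of 0] a_pos[of i] b_pos[of i] by (simp add: K_def)
  have term_bound: "a j / b j \<le> K i * g i j" for i j
  proof -
    have "a j / b j = ((b i / b j) / (1 + a i / a j)) * ((a j + a i) / b i)"
      using a_pos b_pos by (intro quotient_eq_phi_mult)
    also have "\<dots> \<le> C * g i j * ((a 0 + a i) / b i)"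
      using phi[of i j] a_pos[of i] a_pos[of j] b_pos[of i] C_pos mu a_le_a0[of j]
      unfolding g_def by (intro mult_mono divide_right_mono) auto
    finally show ?thesis by (simp add: K_def ac_simps)
  qed
  have K_g_summable: "summable (\<lambda>j. K i * g i j)" for i
    using g_sums(1) by (rule summable_mult)
  have summable: "summable (\<lambda>n. a n / b n)"
    using a_pos b_pos term_bound[of _ 0]
    by (intro summable_comparison_test[OF _ K_g_summable[of 0]]) (auto simp: less_imp_le)
  have "(\<Sum>j. a j / b j) \<le> (C * (1 + \<mu>) / (1 - \<mu>)) * (a 0 + a i) / b i" for i
  proof -
    have "(\<Sum>j. a j / b j) \<le> (\<Sum>j. K i * g i j)"
      using summable K_g_summable term_bound by (intro suminf_le) auto
    also have "\<dots> = K i * suminf (g i)"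
      using suminf_mult[OF g_sums(1)] by simp
    also have "\<dots> \<le> K i * ((1 + \<mu>) / (1 - \<mu>))"
      using g_sums(2) K_nonneg by (rule mult_left_mono)
    finally show ?thesis by (simp add: K_def ac_simps)
  qed
  with summable show ?thesis by blast
qed

end
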